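(* Let $\mathbf H$ be a Hopf submonoid of $\mathbf{GP}^+$ spanned by a family of extended generalized permutahedra, let $R$ be a (not necessarily commutative) ring with multiplication $m_R$, let $I=S_1\sqcup\cdots\sqcup S_k$ be a set decomposition, and for $1\le i\le k$ let $f_i:\mathbf H[S_i]\to R$ be linear maps that are strong valuations. Then the linear map $$m_R\circ(f_1\otimes f_2\otimes\cdots\otimes f_k)\circ\Delta_{S_1,\dots,S_k}:\mathbf H[I]\to R$$ is a strong valuation. Consequently, any finite sum of such maps is a strong valuation.
   Context: $\mathbf{GP}^+$ is the Hopf monoid of extended generalized permutahedra: $\mathbf{GP}^+[I]$ has basis the polyhedra $P=\{x\in\mathbb R^I:\sum_{i\in I}x_i=z(I),\ \sum_{i\in A}x_i\le z(A)\ \forall A\subseteq I\}$ with $z:2^I\to\mathbb R\cup\{\infty\}$ submodular on its finite values and $z(I)$ finite; product $m_{S,T}(P,Q)=P\times Q$; coproduct $\Delta_{S,T}(P)=P|_S\otimes P/_S$ where $P|_S\times P/_S$ ($P|_S\subseteq\mathbb R^S$, $P/_S\subseteq\mathbb R^T$) is the face of $P$ maximizing $\sum_{i\in S}x_i$ if this functional is bounded above on $P$, and $0$ otherwise. A Hopf submonoid is a subspecies closed under product and coproduct. $\Delta_{S_1,\dots,S_k}:\mathbf H[I]\to\mathbf H[S_1]\otimes\cdots\otimes\mathbf H[S_k]$ is the iterated coproduct (well-defined by coassociativity); a set decomposition is an ordered sequence of pairwise disjoint, possibly empty sets with union $I$. For $\mathbf H$ spanned by a family of polyhedra, $\mathbb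 I(\mathbf H)[I]$ is the span of indicator functions $\mathbb 1_P$ of members $P\subseteq\mathbb R^I$ of the family. A linear map $f:\mathbf H[I]\to A$ is a strong valuation if there is a linear map $\hat f:\mathbb I(\mathbf H)[I]\to A$ with $f(P)=\hat f(\mathbb 1_P)$ for all such $P$ (equivalently, $f(\sum_j\lambda_jP_j)=0$ whenever $\sum_j\lambda_j\mathbb 1_{P_j}=0$). *)

theory Defs
  imports Main "HOL-Library.Extended_Real"
begin

type_synonym 'e poly = "('e \<Rightarrow> real) set"

text \<open>Points of R^I are functions vanishing outside I.\<close>
definition vecs :: "'e set \<Rightarrow> ('e \<Rightarrow> real) set" where
  "vecs I = {x. \<forall>i. i \<notin> I \<longrightarrow> x i = 0}"

definition restr :: "'e set \<Rightarrow> ('e \<Rightarrow> real) \<Rightarrow> ('e \<Rightarrow> real)" where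
  "restr A x = (\<lambda>i. if i \<in> A then x i else 0)"

definition submod_fin :: "'e set \<Rightarrow> ('e set \<Rightarrow> ereal) \<Rightarrow> bool" where
  "submod_fin I z \<longleftrightarrow> (\<forall>A B. A \<subseteq> I \<longrightarrow> B \<subseteq> I \<longrightarrow> z A \<noteq> \<infinity> \<longrightarrow> z B \<noteq> \<infinity> \<longrightarrow>
       z (A \<union> B) + z (A \<inter> B) \<le> z A + z B)"

definition ext_gp :: "'e set \<Rightarrow> 'e poly \<Rightarrow> bool" where
  "ext_gp I P \<longleftrightarrow> finite I \<and> (\<exists>z :: 'e set \<Rightarrow> ereal.
      (\<forall>A. A \<subseteq> I \<longrightarrow> z A \<noteq> -\<infinity>) \<and> z I \<noteq> \<infinity> \<and> submod_fin I z \<and>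
      P = {x \<in> vecs I. ereal (\<Sum>i\<in>I. x i) = z I \<and>
                       (\<forall>A. A \<subseteq> I \<longrightarrow> ereal (\<Sum>i\<in>A. x i) \<le> z A)})"

text \<open>Coproduct Delta_{S, I-S}: None encodes 0.\<close>
definition cop :: "'e set \<Rightarrow> 'e set \<Rightarrow> 'e poly \<Rightarrow> ('e poly \<times> 'e poly) option" where
  "cop I S P = (if bdd_above ((\<lambda>x. \<Sum>i\<in>S. x i) ` P) then
      (let Fc = {x \<in> P. \<forall>y \<in> P. (\<Sum>i\<in>S. y i) \<le> (\<Sum>i\<in>S. x i)}
       in Some (restr S ` Fc, restr (I - S) ` Fc))
     else None)"

text \<open>Iterated coproduct Delta_{S_1,...,S_k}, via coassociativity:
  (id (x) Delta_{S_2,...,S_k}) o Delta_{S_1, S_2 u ... u S_k}.\<close>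
fun icop :: "'e set \<Rightarrow> 'e set list \<Rightarrow> 'e poly \<Rightarrow> 'e poly list option" where
  "icop I [] P = Some []"
| "icop I [S] P = Some [P]"
| "icop I (S # S' # Ss) P = (case cop I S P of None \<Rightarrow> None
     | Some (A, B) \<Rightarrow> map_option (Cons A) (icop (I - S) (S' # Ss) B))"

text \<open>m_R o (f_1 (x) ... (x) f_k) o Delta_{S_1,...,S_k}, on basis elements.\<close>
definition comp_map :: "'e set \<Rightarrow> 'e set list \<Rightarrow> ('e poly \<Rightarrow> 'r::ring_1) list \<Rightarrow> 'e poly \<Rightarrow> 'r" where
  "comp_map I S fs P = (case icop I S P of None \<Rightarrow> 0
      | Some Ps \<Rightarrow> prod_list (map (\<lambda>(f, Q). f Q) (zip fs Ps)))"

definition basis :: "('e set \<times> 'e poly) set \<Rightarrow> 'e set \<Rightarrow> 'e poly set" where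
  "basis F I = {P. (I, P) \<in> F}"

definition k_algebra :: "('k::field \<Rightarrow> 'r::ring_1 \<Rightarrow> 'r) \<Rightarrow> bool" where
  "k_algebra sc \<longleftrightarrow> (\<forall>a x y. sc a (x + y) = sc a x + sc a y) \<and>
     (\<forall>a b x. sc (a + b) x = sc a x + sc b x) \<and>
     (\<forall>a b x. sc (a * b) x = sc a (sc b x)) \<and> (\<forall>x. sc 1 x = x) \<and>
     (\<forall>a x y. sc a (x * y) = sc a x * y \<and> sc a (x * y) = x * sc a y)"

text \<open>A linear map H[I] -> R, given by its values f on the basis, is a strong valuation iff
  f(sum c_P P) = 0 whenever sum c_P 1_P = 0.\<close>
definition strong_val :: "('k::field \<Rightarrow> 'r::ring_1 \<Rightarrow> 'r) \<Rightarrow> ('e set \<times> 'e poly) set \<Rightarrow> 'e set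
     \<Rightarrow> ('e poly \<Rightarrow> 'r) \<Rightarrow> bool" where
  "strong_val sc F I f \<longleftrightarrow> (\<forall>c :: 'e poly \<Rightarrow> 'k.
      finite {P. c P \<noteq> 0} \<longrightarrow> {P. c P \<noteq> 0} \<subseteq> basis F I \<longrightarrow>
      (\<forall>x. (\<Sum>P | c P \<noteq> 0. c P * (if x \<in> P then 1 else 0)) = 0) \<longrightarrow>
      (\<Sum>P | c P \<noteq> 0. sc (c P) (f P)) = 0)"

definition prod_poly :: "'e set \<Rightarrow> 'e set \<Rightarrow> 'e poly \<Rightarrow> 'e poly \<Rightarrow> 'e poly" where
  "prod_poly S T P Q = {x \<in> vecs (S \<union> T). restr S x \<in> P \<and> restr T x \<in> Q}"

definition relabel :: "'e set \<Rightarrow> 'e set \<Rightarrow> ('e \<Rightarrow> 'e) \<Rightarrow> 'e poly \<Rightarrow> 'e poly" where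
  "relabel I J \<sigma> P = {y \<in> vecs J. (\<lambda>i. if i \<in> I then y (\<sigma> i) else 0) \<in> P}"

text \<open>F (pairs (I,P), P in GP+[I]) spans a Hopf submonoid H of GP+.\<close>
definition hopf_sub :: "('e set \<times> 'e poly) set \<Rightarrow> bool" where
  "hopf_sub F \<longleftrightarrow> (\<forall>I P. (I, P) \<in> F \<longrightarrow> ext_gp I P) \<and>
     (\<forall>I J \<sigma> P. (I, P) \<in> F \<longrightarrow> bij_betw \<sigma> I J \<longrightarrow> (J, relabel I J \<sigma> P) \<in> F) \<and>
     (\<forall>S T P Q. (S, P) \<in> F \<longrightarrow> (T, Q) \<in> F \<longrightarrow> S \<inter> T = {} \<longrightarrow> (S \<union> T, prod_poly S T P Q) \<in> F) \<and>
     (\<forall>I S P A B. (I, P) \<in> F \<longrightarrow> S \<subseteq> I \<longrightarrow> cop I S P = Some (A, B) \<longrightarrow>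
         (S, A) \<in> F \<and> (I - S, B) \<in> F)"

definition set_decomp :: "'e set \<Rightarrow> 'e set list \<Rightarrow> bool" where
  "set_decomp I S \<longleftrightarrow> (\<forall>i < length S. \<forall>j < length S. i \<noteq> j \<longrightarrow> S ! i \<inter> S ! j = {}) \<and>
     \<Union> (set S) = I"

definition val_data :: "('k::field \<Rightarrow> 'r::ring_1 \<Rightarrow> 'r) \<Rightarrow> ('e set \<times> 'e poly) set \<Rightarrow> 'e set
     \<Rightarrow> 'e set list \<Rightarrow> ('e poly \<Rightarrow> 'r) list \<Rightarrow> bool" where
  "val_data sc F I S fs \<longleftrightarrow> set_decomp I S \<and> S \<noteq> [] \<and> length fs = length S \<and>
     (\<forall>i < length S. strong_val sc F (S ! i) (fs ! i))"

end

(* A linear relation among indicator functions of extended generalized permutahedra passes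
   to their faces maximising the sum of the coordinates in S. Near a point x the polyhedra
   look like their cones of feasible directions, so these cones satisfy the same relation; x
   lies on the face of P iff the feasible cone of P at x misses the half-space where the
   objective is at least 1; and the Euler characteristic, a valuation on compact convex sets,
   turns the relation among the sliced cones into one among the coefficients. By submodularity
   the face is the product of its restriction and contraction, so the relation becomes one
   among products of indicator functions of the two tensor factors, which a tensor product of
   strong valuations respects (Gaussian elimination on the left factors). Induction on the
   number of blocks handles the iterated coproduct. *)

theory Submission
  imports Defs "HOL-Analysis.Function_Topology"
begin

section \<open>Euler characteristic of compact convex sets\<close>

(* Convexity in R^E, spelled out since function spaces carry no real_vector instance. *)
definition fconvex :: "('e \<Rightarrow> real) set \<Rightarrow> bool" where
  "fconvex K \<longleftrightarrow> (\<forall>x\<in>K. \<forall>y\<in>K. \<forall>u::real. 0 \<le> u \<and> u \<le> 1 \<longrightarrow> (\<lambda>i. (1 - u) * x i + u * y i) \<in> K)"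

definition agrees_off :: "'e set \<Rightarrow> ('e \<Rightarrow> real) \<Rightarrow> ('e \<Rightarrow> real) set \<Rightarrow> bool" where
  "agrees_off J b K \<longleftrightarrow> (\<forall>x\<in>K. \<forall>i. i \<notin> J \<longrightarrow> x i = b i)"

lemma fconvex_Int: "fconvex A \<Longrightarrow> fconvex B \<Longrightarrow> fconvex (A \<inter> B)"
  unfolding fconvex_def by blast

lemma closed_coordinate_eq: "closed {v::'e \<Rightarrow> real. v j = t}"
  by (rule closed_Collect_eq) (simp_all add: continuous_on_const)

lemma coordinate_image_fconvex_compact:
  fixes K :: "('e \<Rightarrow> real) set"
  assumes "compact K" "fconvex K" "K \<noteq> {}"
  shows "\<exists>a b. a \<le> b \<and> (\<lambda>v. v j) ` K = {a..b}"
proof -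
  let ?Y = "(\<lambda>v. v j) ` K"
  have cY: "compact ?Y"
    by (rule compact_continuous_image[OF _ assms(1)])
       (rule continuous_on_subset[OF continuous_on_product_coordinates], simp)
  have ne: "?Y \<noteq> {}" using assms(3) by auto
  obtain va where va: "va \<in> K" "\<forall>v\<in>K. va j \<le> v j"
    using compact_attains_inf[OF cY ne] by blast
  obtain vb where vb: "vb \<in> K" "\<forall>v\<in>K. v j \<le> vb j"
    using compact_attains_sup[OF cY ne] by blast
  have "{va j..vb j} \<subseteq> ?Y"
  proof
    fix t assume t: "t \<in> {va j..vb j}"
    show "t \<in> ?Y"
    proof (cases "va j = vb j")
      case True then show ?thesis using t va(1) by (intro image_eqI[of _ _ va]) auto
    next
      case False
      define u where "u = (t - va j) / (vb j - va j)"
      have "0 \<le> u" "u \<le> 1" using t False by (auto simp: u_def field_simps)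
      then have "(\<lambda>i. (1 - u) * va i + u * vb i) \<in> K"
        using assms(2) va vb unfolding fconvex_def by blast
      moreover have "(1 - u) * va j + u * vb j = t"
      proof -
        have "(1 - u) * va j + u * vb j = va j + u * (vb j - va j)" by (simp add: algebra_simps)
        then show ?thesis using False by (simp add: u_def)
      qed
      ultimately show ?thesis by force
    qed
  qed
  moreover have "?Y \<subseteq> {va j..vb j}" using va vb by auto
  ultimately show ?thesis using va vb by (intro exI[of _ "va j"] exI[of _ "vb j"]) auto
qed

lemma exists_gap_above:
  fixes E :: "real set"
  assumes "finite E"
  obtains t' where "t < t'" "\<And>s. s \<in> E \<Longrightarrow> s \<le> t \<or> t' < s"
proof (cases "{s\<in>E. t < s} = {}")
  case True
  then show ?thesis by (intro that[of "t + 1"]) auto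
next
  case False
  let ?m = "Min {s\<in>E. t < s}"
  have "?m \<in> {s\<in>E. t < s}" using False assms by (intro Min_in) auto
  then have m: "t < ?m" by simp
  have le: "?m \<le> s" if "s \<in> E" "t < s" for s using that assms by (intro Min_le) auto
  show ?thesis
  proof (rule that)
    show "t < (t + ?m) / 2" using m by simp
    fix s assume "s \<in> E"
    then show "s \<le> t \<or> (t + ?m) / 2 < s" using m le[of s] by (cases "t < s") auto
  qed
qed

text \<open>The Euler characteristic in dimension one: the weight of the intervals ending at t is
  the difference of the slices at t and just above t.\<close>
lemma sum_zero_if_interval_weights_zero:
  fixes c :: "'m \<Rightarrow> 'k::comm_ring_1" and a b :: "'m \<Rightarrow> real"
  assumes fM: "finite M" and ab: "\<And>m. m \<in> M \<Longrightarrow> a m \<le> b m"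
    and slice: "\<And>t. (\<Sum>m\<in>{m\<in>M. a m \<le> t \<and> t \<le> b m}. c m) = 0"
  shows "sum c M = 0"
proof -
  have top: "(\<Sum>m\<in>{m\<in>M. b m = t}. c m) = 0" for t
  proof -
    obtain t' where tt': "t < t'" and gap: "\<And>s. s \<in> a ` M \<union> b ` M \<Longrightarrow> s \<le> t \<or> t' < s"
      using exists_gap_above[of "a ` M \<union> b ` M" t] fM by blast
    have eq: "{m\<in>M. a m \<le> t' \<and> t' \<le> b m} = {m\<in>M. a m \<le> t \<and> t \<le> b m} - {m\<in>M. b m = t}"
    proof -
      have "a m \<le> t' \<longleftrightarrow> a m \<le> t" "t' \<le> b m \<longleftrightarrow> t < b m" if "m \<in> M" for m
        using gap[of "a m"] gap[of "b m"] that tt' by auto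
      then show ?thesis using ab by auto
    qed
    have "(\<Sum>m\<in>{m\<in>M. a m \<le> t' \<and> t' \<le> b m}. c m)
        = (\<Sum>m\<in>{m\<in>M. a m \<le> t \<and> t \<le> b m}. c m) - (\<Sum>m\<in>{m\<in>M. b m = t}. c m)"
      unfolding eq using fM ab by (intro sum_diff) auto
    then show ?thesis using slice[of t] slice[of t'] by simp
  qed
  have "sum c M = (\<Sum>t\<in>b ` M. \<Sum>m\<in>{m\<in>M. b m = t}. c m)"
    using sum.image_gen[OF fM, of c b] by simp
  also have "\<dots> = 0" using top by simp
  finally show ?thesis .
qed

lemma fconvex_coordinate_eq: "fconvex {v::'e \<Rightarrow> real. v j = t}"
  unfolding fconvex_def by (auto simp: algebra_simps)

lemma sum_indicator_fibre:
  fixes K :: "'m \<Rightarrow> ('e \<Rightarrow> real) set" and c :: "'m \<Rightarrow> 'k::comm_ring_1"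
  assumes "finite M" and Mt: "\<And>m. m \<in> M \<Longrightarrow> m \<notin> Mt \<Longrightarrow> t \<notin> (\<lambda>v. v j) ` K m" and "Mt \<subseteq> M"
    and rel: "\<And>y. (\<Sum>m\<in>M. c m * indicator (K m) y) = 0"
  shows "(\<Sum>m\<in>Mt. c m * indicator (K m \<inter> {v. v j = t}) y) = 0"
proof (cases "y j = t")
  case True
  have "(\<Sum>m\<in>Mt. c m * indicator (K m \<inter> {v. v j = t}) y) = (\<Sum>m\<in>M. c m * indicator (K m) y)"
  proof (rule sum.mono_neutral_cong_left)
    show "\<forall>m\<in>M - Mt. c m * indicator (K m) y = 0"
      using Mt True by (auto simp: indicator_def)
  qed (use assms True in \<open>auto simp: indicator_def\<close>)
  then show ?thesis using rel by simp
qed (simp add: indicator_def)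

lemma coordinate_slice:
  assumes "compact K" "fconvex K" "agrees_off (insert j J) b K" "t \<in> (\<lambda>v. v j) ` K"
  shows "K \<inter> {v. v j = t} \<noteq> {} \<and> compact (K \<inter> {v. v j = t}) \<and>
    fconvex (K \<inter> {v. v j = t}) \<and> agrees_off J (b(j := t)) (K \<inter> {v. v j = t})"
  using assms
  by (auto simp: compact_Int_closed closed_coordinate_eq fconvex_Int fconvex_coordinate_eq agrees_off_def)

text \<open>The Euler characteristic is a valuation on compact convex sets. Induction on the number
  of free coordinates, slicing along one of them.\<close>
lemma sum_weights_zero_if_indicators_cancel:
  fixes K :: "'m \<Rightarrow> ('e \<Rightarrow> real) set" and c :: "'m \<Rightarrow> 'k::comm_ring_1"
  assumes "finite J" "finite M"
    and "\<And>m. m \<in> M \<Longrightarrow> K m \<noteq> {} \<and> compact (K m) \<and> fconvex (K m) \<and> agrees_off J b (K m)"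
    and "\<And>y. (\<Sum>m\<in>M. c m * indicator (K m) y) = 0"
  shows "sum c M = 0"
  using assms
proof (induction J arbitrary: b M K c rule: finite_induct)
  case empty
  have "b \<in> K m" if m: "m \<in> M" for m
  proof -
    obtain x where "x \<in> K m" "agrees_off {} b (K m)" using empty.prems(2)[OF m] by blast
    moreover from this have "x = b" by (intro ext) (auto simp: agrees_off_def)
    ultimately show ?thesis by simp
  qed
  then show ?case using empty.prems(3)[of b] by simp
next
  case (insert j J)
  define lo where "lo m = Inf ((\<lambda>v. v j) ` K m)" for m
  define hi where "hi m = Sup ((\<lambda>v. v j) ` K m)" for m
  have lohi: "lo m \<le> hi m \<and> (\<lambda>v. v j) ` K m = {lo m..hi m}" if m: "m \<in> M" for m
  proof -
    obtain p q where "p \<le> q" "(\<lambda>v. v j) ` K m = {p..q}"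
      using coordinate_image_fconvex_compact[of "K m" j] insert.prems(2)[OF m] by blast
    then show ?thesis unfolding lo_def hi_def by simp
  qed
  show ?case
  proof (rule sum_zero_if_interval_weights_zero[OF \<open>finite M\<close>])
    show "lo m \<le> hi m" if "m \<in> M" for m using lohi[OF that] by blast
    fix t
    let ?Mt = "{m\<in>M. lo m \<le> t \<and> t \<le> hi m}"
    show "(\<Sum>m\<in>?Mt. c m) = 0"
    proof (rule insert.IH)
      show "finite ?Mt" using \<open>finite M\<close> by simp
      fix m assume "m \<in> ?Mt"
      then show "K m \<inter> {v. v j = t} \<noteq> {} \<and> compact (K m \<inter> {v. v j = t}) \<and>
          fconvex (K m \<inter> {v. v j = t}) \<and> agrees_off J (b(j := t)) (K m \<inter> {v. v j = t})"
        using coordinate_slice[of "K m" j J b t] insert.prems(2) lohi by auto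
    next
      fix y
      show "(\<Sum>m\<in>?Mt. c m * indicator (K m \<inter> {v. v j = t}) y) = 0"
        by (rule sum_indicator_fibre[OF \<open>finite M\<close> _ _ insert.prems(3)]) (use lohi in auto)
    qed
  qed
qed

section \<open>Feasible cones of extended generalized permutahedra\<close>

definition gp_poly :: "'e set \<Rightarrow> ('e set \<Rightarrow> ereal) \<Rightarrow> ('e \<Rightarrow> real) set" where
  "gp_poly I z = {x \<in> vecs I. ereal (\<Sum>i\<in>I. x i) = z I \<and> (\<forall>A. A \<subseteq> I \<longrightarrow> ereal (\<Sum>i\<in>A. x i) \<le> z A)}"

definition ext_submodular :: "'e set \<Rightarrow> ('e set \<Rightarrow> ereal) \<Rightarrow> bool" where
  "ext_submodular I z \<longleftrightarrow> (\<forall>A. A \<subseteq> I \<longrightarrow> z A \<noteq> -\<infinity>) \<and> z I \<noteq> \<infinity> \<and> submod_fin I z"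

lemma ext_gp_iff: "ext_gp I P \<longleftrightarrow> finite I \<and> (\<exists>z. ext_submodular I z \<and> P = gp_poly I z)"
  unfolding ext_gp_def ext_submodular_def gp_poly_def by blast

lemma sum_affine: "(\<Sum>i\<in>A. x i + e * v i) = (\<Sum>i\<in>A. x i) + e * (\<Sum>i\<in>A. v i :: real)"
  by (simp add: sum.distrib sum_distrib_left)

lemma eventually_affine_eq_iff:
  "\<forall>\<^sub>F e in at_right 0. (a + e * b = r \<longleftrightarrow> a = r \<and> b = (0::real))"
proof (cases "a = r")
  case True
  show ?thesis using eventually_at_right_less[of 0] by (rule eventually_mono) (simp add: True)
next
  case False
  have "((\<lambda>e. a + e * b) \<longlongrightarrow> a) (at_right 0)" by (auto intro!: tendsto_eq_intros)
  then have "\<forall>\<^sub>F e in at_right 0. a + e * b \<noteq> r" using False by (rule tendsto_imp_eventually_ne)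
  then show ?thesis by (rule eventually_mono) (simp add: False)
qed

lemma eventually_affine_le_iff:
  assumes "w \<noteq> -\<infinity>"
  shows "\<forall>\<^sub>F e in at_right 0. (ereal (a + e * b) \<le> w \<longleftrightarrow> ereal a < w \<or> (ereal a = w \<and> b \<le> 0))"
proof (cases w)
  case (real r)
  have lim: "((\<lambda>e. a + e * b) \<longlongrightarrow> a) (at_right 0)" by (auto intro!: tendsto_eq_intros)
  consider "a < r" | "a = r" | "r < a" by linarith
  then show ?thesis
  proof cases
    case 1
    show ?thesis using order_tendstoD(2)[OF lim 1] by (rule eventually_mono) (simp add: real 1)
  next
    case 2
    show ?thesis using eventually_at_right_less[of 0]
      by (rule eventually_mono) (simp add: real 2 mult_le_0_iff)
  next
    case 3
    show ?thesis using order_tendstoD(1)[OF lim 3] by (rule eventually_mono) (use 3 in \<open>auto simp: real\<close>)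
  qed
qed (use assms in auto)

lemma eventually_affine_mem_vecs_iff:
  "\<forall>\<^sub>F e in at_right 0. ((\<lambda>i. x i + e * v i) \<in> vecs I \<longleftrightarrow> x \<in> vecs I \<and> v \<in> vecs I)"
proof (cases "x \<in> vecs I")
  case True
  show ?thesis using eventually_at_right_less[of 0]
    by (rule eventually_mono) (use True in \<open>auto simp: vecs_def\<close>)
next
  case False
  then obtain i where i: "i \<notin> I" "x i \<noteq> 0" by (auto simp: vecs_def)
  show ?thesis using eventually_affine_eq_iff[of "x i" "v i" 0]
    by (rule eventually_mono) (use i in \<open>auto simp: vecs_def\<close>)
qed

lemma all_less_or_eq_iff:
  fixes p w :: "'b \<Rightarrow> 'a::order"
  shows "(\<forall>A. Q A \<longrightarrow> p A < w A \<or> (p A = w A \<and> R A)) \<longleftrightarrow>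
    (\<forall>A. Q A \<longrightarrow> p A \<le> w A) \<and> (\<forall>A. Q A \<longrightarrow> p A = w A \<longrightarrow> R A)"
  by (auto simp: le_less)

lemma eventually_affine_mem_gp_poly_iff:
  assumes z: "ext_submodular I z" and fI: "finite I"
  shows "\<forall>\<^sub>F e in at_right 0. ((\<lambda>i. x i + e * v i) \<in> gp_poly I z \<longleftrightarrow>
     x \<in> gp_poly I z \<and> v \<in> vecs I \<and> (\<Sum>i\<in>I. v i) = 0 \<and>
     (\<forall>A. A \<subseteq> I \<longrightarrow> ereal (\<Sum>i\<in>A. x i) = z A \<longrightarrow> (\<Sum>i\<in>A. v i) \<le> 0))"
proof -
  obtain r where r: "z I = ereal r" using z by (cases "z I") (auto simp: ext_submodular_def)
  have "\<forall>A\<in>Pow I. \<forall>\<^sub>F e in at_right 0. (ereal ((\<Sum>i\<in>A. x i) + e * (\<Sum>i\<in>A. v i)) \<le> z A \<longleftrightarrow>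
      ereal (\<Sum>i\<in>A. x i) < z A \<or> (ereal (\<Sum>i\<in>A. x i) = z A \<and> (\<Sum>i\<in>A. v i) \<le> 0))"
    using z by (auto simp: ext_submodular_def intro!: eventually_affine_le_iff)
  then have "\<forall>\<^sub>F e in at_right 0. \<forall>A\<in>Pow I. (ereal ((\<Sum>i\<in>A. x i) + e * (\<Sum>i\<in>A. v i)) \<le> z A \<longleftrightarrow>
      ereal (\<Sum>i\<in>A. x i) < z A \<or> (ereal (\<Sum>i\<in>A. x i) = z A \<and> (\<Sum>i\<in>A. v i) \<le> 0))"
    using fI by (intro eventually_ball_finite) auto
  with eventually_affine_mem_vecs_iff[of x v I]
    eventually_affine_eq_iff[of "\<Sum>i\<in>I. x i" "\<Sum>i\<in>I. v i" r]
  show ?thesis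
  proof eventually_elim
    case (elim e)
    let ?tight = "\<lambda>A. ereal (\<Sum>i\<in>A. x i) = z A"
    have "(\<lambda>i. x i + e * v i) \<in> gp_poly I z \<longleftrightarrow> (x \<in> vecs I \<and> v \<in> vecs I) \<and>
        ((\<Sum>i\<in>I. x i) = r \<and> (\<Sum>i\<in>I. v i) = 0) \<and>
        (\<forall>A. A \<subseteq> I \<longrightarrow> ereal (\<Sum>i\<in>A. x i) < z A \<or> (?tight A \<and> (\<Sum>i\<in>A. v i) \<le> 0))"
    proof -
      have "ereal (\<Sum>i\<in>A. x i + e * v i) \<le> z A \<longleftrightarrow>
          ereal (\<Sum>i\<in>A. x i) < z A \<or> (?tight A \<and> (\<Sum>i\<in>A. v i) \<le> 0)" if "A \<subseteq> I" for A
        using elim(3) that unfolding sum_affine by blast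
      moreover have "ereal (\<Sum>i\<in>I. x i + e * v i) = z I \<longleftrightarrow> (\<Sum>i\<in>I. x i) = r \<and> (\<Sum>i\<in>I. v i) = 0"
        using elim(2) unfolding sum_affine r by simp
      ultimately show ?thesis using elim(1) unfolding gp_poly_def mem_Collect_eq by blast
    qed
    also have "\<dots> \<longleftrightarrow> x \<in> gp_poly I z \<and> v \<in> vecs I \<and> (\<Sum>i\<in>I. v i) = 0 \<and>
        (\<forall>A. A \<subseteq> I \<longrightarrow> ?tight A \<longrightarrow> (\<Sum>i\<in>A. v i) \<le> 0)"
      unfolding gp_poly_def r all_less_or_eq_iff by auto
    finally show ?case .
  qed
qed

definition feasible_cone :: "('e \<Rightarrow> real) set \<Rightarrow> ('e \<Rightarrow> real) \<Rightarrow> ('e \<Rightarrow> real) set" where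
  "feasible_cone P x = {v. \<forall>\<^sub>F e in at_right 0. (\<lambda>i. x i + e * v i) \<in> P}"

lemma feasible_cone_gp_poly:
  assumes "ext_submodular I z" "finite I"
  shows "feasible_cone (gp_poly I z) x = {v. x \<in> gp_poly I z \<and> v \<in> vecs I \<and> (\<Sum>i\<in>I. v i) = 0 \<and>
     (\<forall>A. A \<subseteq> I \<longrightarrow> ereal (\<Sum>i\<in>A. x i) = z A \<longrightarrow> (\<Sum>i\<in>A. v i) \<le> 0)}"
  unfolding feasible_cone_def
  using eventually_subst[OF eventually_affine_mem_gp_poly_iff[OF assms]]
  by (simp add: eventually_const_iff trivial_limit_at_right_real)

lemma eventually_mem_iff_feasible_cone:
  assumes "ext_gp I P"
  shows "\<forall>\<^sub>F e in at_right 0. ((\<lambda>i. x i + e * v i) \<in> P \<longleftrightarrow> v \<in> feasible_cone P x)"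
proof -
  obtain z where "ext_submodular I z" "finite I" "P = gp_poly I z" using assms by (auto simp: ext_gp_iff)
  then show ?thesis using eventually_affine_mem_gp_poly_iff[of I z x v] by (simp add: feasible_cone_gp_poly)
qed

lemma feasible_cone_subset_vecs: "ext_gp I P \<Longrightarrow> feasible_cone P x \<subseteq> vecs I"
  by (auto simp: ext_gp_iff feasible_cone_gp_poly)

lemma closed_feasible_cone:
  assumes "ext_gp I P"
  shows "closed (feasible_cone P x)"
proof -
  obtain z where z: "ext_submodular I z" "finite I" "P = gp_poly I z" using assms by (auto simp: ext_gp_iff)
  show ?thesis unfolding z(3) feasible_cone_gp_poly[OF z(1,2)] vecs_def mem_Collect_eq
    by (intro closed_Collect_conj closed_Collect_all closed_Collect_imp closed_Collect_const
        open_Collect_const closed_Collect_eq closed_Collect_le continuous_on_sum continuous_on_const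
        continuous_on_product_coordinates)
qed

lemma sum_convex_comb:
  "(\<Sum>i\<in>A. (1 - u) * x i + u * y i) = (1 - u) * (\<Sum>i\<in>A. x i) + u * (\<Sum>i\<in>A. y i :: real)"
  by (simp add: sum.distrib sum_distrib_left)

lemma fconvex_feasible_cone:
  assumes "ext_gp I P"
  shows "fconvex (feasible_cone P x)"
proof -
  obtain z where z: "ext_submodular I z" "finite I" "P = gp_poly I z" using assms by (auto simp: ext_gp_iff)
  show ?thesis unfolding z(3) fconvex_def feasible_cone_gp_poly[OF z(1,2)]
    by (auto simp: vecs_def sum_convex_comb intro!: add_nonpos_nonpos mult_nonneg_nonpos)
qed

lemma scaled_diff_in_feasible_cone:
  assumes "ext_submodular I z" "finite I" "x \<in> gp_poly I z" "y \<in> gp_poly I z" "0 \<le> t"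
  shows "(\<lambda>i. t * (y i - x i)) \<in> feasible_cone (gp_poly I z) x"
proof -
  have "(\<Sum>i\<in>A. y i) \<le> (\<Sum>i\<in>A. x i)" if "A \<subseteq> I" "ereal (\<Sum>i\<in>A. x i) = z A" for A
  proof -
    have "ereal (\<Sum>i\<in>A. y i) \<le> z A" using assms(4) that(1) by (simp add: gp_poly_def)
    then show ?thesis by (simp add: that(2)[symmetric])
  qed
  moreover have "ereal (\<Sum>i\<in>I. y i) = ereal (\<Sum>i\<in>I. x i)" using assms(3,4) by (simp add: gp_poly_def)
  then have "(\<Sum>i\<in>I. y i) = (\<Sum>i\<in>I. x i)" by simp
  moreover have "x \<in> vecs I" "y \<in> vecs I" using assms(3,4) by (auto simp: gp_poly_def)
  ultimately show ?thesis using assms(3,5) unfolding feasible_cone_gp_poly[OF assms(1,2)]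
    by (auto simp: vecs_def sum_distrib_left[symmetric] sum_subtractf intro!: mult_nonneg_nonpos)
qed

definition max_face :: "'e set \<Rightarrow> ('e \<Rightarrow> real) set \<Rightarrow> ('e \<Rightarrow> real) set" where
  "max_face S P = {x\<in>P. \<forall>y\<in>P. (\<Sum>i\<in>S. y i) \<le> (\<Sum>i\<in>S. x i)}"

lemma max_face_iff_feasible_cone:
  assumes P: "ext_gp I P" and x: "x \<in> P"
  shows "x \<in> max_face S P \<longleftrightarrow> feasible_cone P x \<inter> {v. 1 \<le> (\<Sum>i\<in>S. v i)} = {}"
proof
  assume max: "x \<in> max_face S P"
  show "feasible_cone P x \<inter> {v. 1 \<le> (\<Sum>i\<in>S. v i)} = {}"
  proof (rule ccontr)
    assume "feasible_cone P x \<inter> {v. 1 \<le> (\<Sum>i\<in>S. v i)} \<noteq> {}"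
    then obtain v where v: "v \<in> feasible_cone P x" "1 \<le> (\<Sum>i\<in>S. v i)" by blast
    have "\<forall>\<^sub>F e in at_right 0. 0 < e \<and> (\<lambda>i. x i + e * v i) \<in> P"
      using eventually_conj[OF eventually_at_right_less[of 0] eventually_mem_iff_feasible_cone[OF P, of x v]]
      by (rule eventually_mono) (use v(1) in blast)
    then obtain e where e: "0 < e" "(\<lambda>i. x i + e * v i) \<in> P"
      using eventually_happens'[OF trivial_limit_at_right_real] by blast
    have "(\<Sum>i\<in>S. x i + e * v i) \<le> (\<Sum>i\<in>S. x i)" using max e(2) by (auto simp: max_face_def)
    moreover have "0 < e * (\<Sum>i\<in>S. v i)" using e(1) v(2) by simp
    ultimately show False by (simp add: sum_affine)
  qed
next
  assume empty: "feasible_cone P x \<inter> {v. 1 \<le> (\<Sum>i\<in>S. v i)} = {}"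
  show "x \<in> max_face S P"
  proof (rule ccontr)
    assume "x \<notin> max_face S P"
    then obtain y where y: "y \<in> P" "(\<Sum>i\<in>S. x i) < (\<Sum>i\<in>S. y i)"
      using x by (auto simp: max_face_def not_le)
    obtain z where z: "ext_submodular I z" "finite I" "P = gp_poly I z" using P by (auto simp: ext_gp_iff)
    define d where "d = (\<Sum>i\<in>S. y i) - (\<Sum>i\<in>S. x i)"
    have "d > 0" using y(2) by (simp add: d_def)
    then have "(\<lambda>i. (1 / d) * (y i - x i)) \<in> feasible_cone P x"
      using scaled_diff_in_feasible_cone[of I z x y "1 / d"] x y z by simp
    moreover have "(\<Sum>i\<in>S. (1 / d) * (y i - x i)) = 1"
      using \<open>d > 0\<close> by (simp add: d_def sum_divide_distrib[symmetric] sum_subtractf)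
    ultimately have "(\<lambda>i. (1 / d) * (y i - x i)) \<in> feasible_cone P x \<inter> {v. 1 \<le> (\<Sum>i\<in>S. v i)}"
      by simp
    then show False using empty by blast
  qed
qed

section \<open>Maximal faces are products\<close>

definition tight :: "'e set \<Rightarrow> ('e set \<Rightarrow> ereal) \<Rightarrow> ('e \<Rightarrow> real) \<Rightarrow> 'e set \<Rightarrow> bool" where
  "tight I z y A \<longleftrightarrow> A \<subseteq> I \<and> ereal (\<Sum>i\<in>A. y i) = z A"

lemma gp_poly_sum_le: "y \<in> gp_poly I z \<Longrightarrow> A \<subseteq> I \<Longrightarrow> ereal (\<Sum>i\<in>A. y i) \<le> z A"
  by (simp add: gp_poly_def)

lemma ext_submodularD:
  "ext_submodular I z \<Longrightarrow> A \<subseteq> I \<Longrightarrow> B \<subseteq> I \<Longrightarrow> z A \<noteq> \<infinity> \<Longrightarrow> z B \<noteq> \<infinity> \<Longrightarrow>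
    z (A \<union> B) + z (A \<inter> B) \<le> z A + z B"
  by (simp add: ext_submodular_def submod_fin_def)

lemma ereal_add_le_sum_imp_eq:
  assumes "ereal p \<le> u" "ereal q \<le> v" "u + v \<le> ereal (p + q)"
  shows "u = ereal p \<and> v = ereal q"
  using assms by (cases u; cases v) auto

lemma tight_union_inter:
  assumes z: "ext_submodular I z" and fI: "finite I" and y: "y \<in> gp_poly I z"
    and A: "tight I z y A" and B: "tight I z y B"
  shows "tight I z y (A \<union> B) \<and> tight I z y (A \<inter> B)"
proof -
  have AB: "A \<subseteq> I" "B \<subseteq> I" using A B by (auto simp: tight_def)
  then have "finite A" "finite B" using fI finite_subset by auto
  then have sums: "(\<Sum>i\<in>A \<union> B. y i) + (\<Sum>i\<in>A \<inter> B. y i) = (\<Sum>i\<in>A. y i) + (\<Sum>i\<in>B. y i)"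
    by (rule sum.union_inter)
  have zAB: "z A = ereal (\<Sum>i\<in>A. y i)" "z B = ereal (\<Sum>i\<in>B. y i)" using A B by (auto simp: tight_def)
  have "z (A \<union> B) + z (A \<inter> B) \<le> z A + z B"
    by (rule ext_submodularD[OF z AB]) (simp_all add: zAB)
  also have "\<dots> = ereal ((\<Sum>i\<in>A \<union> B. y i) + (\<Sum>i\<in>A \<inter> B. y i))"
    using zAB sums by simp
  finally have "z (A \<union> B) = ereal (\<Sum>i\<in>A \<union> B. y i) \<and> z (A \<inter> B) = ereal (\<Sum>i\<in>A \<inter> B. y i)"
    using AB by (intro ereal_add_le_sum_imp_eq gp_poly_sum_le[OF y]) auto
  then show ?thesis using AB by (auto simp: tight_def)
qed

lemma tight_Union_Inter:
  assumes "ext_submodular I z" "finite I" "y \<in> gp_poly I z"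
  shows "finite \<A> \<Longrightarrow> \<A> \<noteq> {} \<Longrightarrow> \<forall>A\<in>\<A>. tight I z y A \<Longrightarrow> tight I z y (\<Union>\<A>) \<and> tight I z y (\<Inter>\<A>)"
proof (induction \<A> rule: finite_ne_induct)
  case (insert A \<A>)
  then show ?case using tight_union_inter[OF assms] by simp
qed simp

lemma sum_indicator_pair:
  assumes "finite A" "i \<noteq> j"
  shows "(\<Sum>k\<in>A. (if k = i then 1 else 0) - (if k = j then 1 else (0::real)))
     = (if i \<in> A then 1 else 0) - (if j \<in> A then 1 else 0)"
  using assms by (simp add: sum_subtractf sum.delta)

text \<open>If no tight set separated i from j, moving mass from j to i would be a feasible direction
  increasing the objective.\<close>
lemma tight_separating:
  assumes z: "ext_submodular I z" and fI: "finite I" and y: "y \<in> max_face S (gp_poly I z)"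
    and "S \<subseteq> I" and i: "i \<in> S" and j: "j \<in> I - S"
  shows "\<exists>A. tight I z y A \<and> i \<in> A \<and> j \<notin> A"
proof (rule ccontr)
  assume no_sep: "\<nexists>A. tight I z y A \<and> i \<in> A \<and> j \<notin> A"
  have ij: "i \<noteq> j" "i \<in> I" "j \<in> I" using i j \<open>S \<subseteq> I\<close> by auto
  define v where "v k = (if k = i then 1 else 0) - (if k = j then 1 else (0::real))" for k
  have "(\<Sum>k\<in>A. v k) \<le> 0" if "A \<subseteq> I" "ereal (\<Sum>k\<in>A. y k) = z A" for A
  proof -
    have "i \<in> A \<longrightarrow> j \<in> A" using no_sep that by (auto simp: tight_def)
    moreover have "finite A" using that fI finite_subset by auto
    ultimately show ?thesis unfolding v_def using sum_indicator_pair[OF _ ij(1)] by auto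
  qed
  moreover have "v \<in> vecs I" "(\<Sum>k\<in>I. v k) = 0"
    using ij fI sum_indicator_pair[OF fI ij(1)] by (auto simp: v_def vecs_def)
  ultimately have "v \<in> feasible_cone (gp_poly I z) y"
    using y by (simp add: feasible_cone_gp_poly[OF z fI] max_face_def)
  moreover have "(\<Sum>k\<in>S. v k) = 1"
    using sum_indicator_pair[of S, OF _ ij(1)] i j \<open>S \<subseteq> I\<close> fI finite_subset by (auto simp: v_def)
  moreover have "ext_gp I (gp_poly I z)" using z fI by (auto simp: ext_gp_iff)
  ultimately show False using max_face_iff_feasible_cone[of I "gp_poly I z" y S] y
    by (auto simp: max_face_def)
qed

lemma max_face_tight:
  assumes z: "ext_submodular I z" and fI: "finite I" and y: "y \<in> max_face S (gp_poly I z)"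
    and SI: "S \<subseteq> I" and "S \<noteq> {}"
  shows "tight I z y S"
proof (cases "S = I")
  case True
  then show ?thesis using y by (simp add: tight_def max_face_def gp_poly_def)
next
  case False
  have yP: "y \<in> gp_poly I z" using y by (simp add: max_face_def)
  define A where "A i j = (SOME A. tight I z y A \<and> i \<in> A \<and> j \<notin> A)" for i j
  have A: "tight I z y (A i j) \<and> i \<in> A i j \<and> j \<notin> A i j" if "i \<in> S" "j \<in> I - S" for i j
    unfolding A_def by (rule someI_ex) (rule tight_separating[OF z fI y SI that])
  define B where "B i = (\<Inter>j\<in>I - S. A i j)" for i
  have B: "tight I z y (B i) \<and> i \<in> B i \<and> B i \<subseteq> S" if i: "i \<in> S" for i
  proof -
    have "I - S \<noteq> {}" "finite (I - S)" using SI False fI by auto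
    then have "tight I z y (B i)"
      unfolding B_def using tight_Union_Inter[OF z fI yP, of "A i ` (I - S)"] A[OF i] by auto
    moreover have "B i \<subseteq> I" using calculation by (simp add: tight_def)
    ultimately show ?thesis using A[OF i] i unfolding B_def by auto
  qed
  then have "S = \<Union>(B ` S)" by blast
  moreover have "tight I z y (\<Union>(B ` S))"
  proof -
    have "finite S" using SI fI by (rule finite_subset)
    then show ?thesis using tight_Union_Inter[OF z fI yP, of "B ` S"] B \<open>S \<noteq> {}\<close> by auto
  qed
  ultimately show ?thesis by simp
qed

lemma sum_glue:
  assumes "finite A" "finite S" and xy: "\<forall>k\<in>S. x k = y k" and xy': "\<forall>k\<in>A - S. x k = y' k"
  shows "(\<Sum>k\<in>A. x k) + (\<Sum>k\<in>S. y' k) = (\<Sum>k\<in>A \<inter> S. y k) + (\<Sum>k\<in>A \<union> S. y' k)"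
proof -
  have "(\<Sum>k\<in>A. x k) = (\<Sum>k\<in>A \<inter> S. y k) + (\<Sum>k\<in>A - S. y' k)"
    using sum.Int_Diff[OF assms(1), of x S] xy xy' by simp
  moreover have "(\<Sum>k\<in>A \<union> S. y' k) = (\<Sum>k\<in>A - S. y' k) + (\<Sum>k\<in>S. y' k)"
  proof -
    have "(A - S) \<inter> S = {}" "(A - S) \<union> S = A \<union> S" by blast+
    then show ?thesis using sum.union_disjoint[of "A - S" S y'] assms(1,2) by simp
  qed
  ultimately show ?thesis by (simp add: ac_simps)
qed

text \<open>This is where submodularity enters.\<close>
lemma gp_poly_glue:
  assumes z: "ext_submodular I z" and fI: "finite I" and SI: "S \<subseteq> I"
    and y: "y \<in> gp_poly I z" and y': "y' \<in> gp_poly I z"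
    and ty: "tight I z y S" and ty': "tight I z y' S"
    and x: "x \<in> vecs I" and xy: "\<forall>k\<in>S. x k = y k" and xy': "\<forall>k\<in>I - S. x k = y' k"
  shows "x \<in> gp_poly I z"
proof -
  have fS: "finite S" using SI fI by (rule finite_subset)
  have zS: "z S = ereal (\<Sum>k\<in>S. y' k)" using ty' by (simp add: tight_def)
  then have sumS: "(\<Sum>k\<in>S. y k) = (\<Sum>k\<in>S. y' k)" using ty by (simp add: tight_def)
  have glue: "(\<Sum>k\<in>A. x k) + (\<Sum>k\<in>S. y' k) = (\<Sum>k\<in>A \<inter> S. y k) + (\<Sum>k\<in>A \<union> S. y' k)"
    if A: "A \<subseteq> I" for A
  proof (rule sum_glue[OF _ fS xy])
    show "finite A" using A fI by (rule finite_subset)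
    show "\<forall>k\<in>A - S. x k = y' k" using A xy' by blast
  qed
  have "ereal (\<Sum>k\<in>I. x k) = z I"
  proof -
    have "(\<Sum>k\<in>I. x k) = (\<Sum>k\<in>I. y' k)" using glue[of I] sumS SI by (simp add: Int_absorb1 Un_absorb2)
    then show ?thesis using y' by (simp add: gp_poly_def)
  qed
  moreover have "ereal (\<Sum>k\<in>A. x k) \<le> z A" if A: "A \<subseteq> I" for A
  proof (cases "z A")
    case (real r)
    have "ereal (\<Sum>k\<in>A \<union> S. y' k) + ereal (\<Sum>k\<in>A \<inter> S. y k) \<le> z (A \<union> S) + z (A \<inter> S)"
      using A SI by (intro add_mono gp_poly_sum_le[OF y'] gp_poly_sum_le[OF y]) auto
    then have "ereal ((\<Sum>k\<in>A \<union> S. y' k) + (\<Sum>k\<in>A \<inter> S. y k)) \<le> z (A \<union> S) + z (A \<inter> S)"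
      by simp
    also have "\<dots> \<le> z A + z S" by (rule ext_submodularD[OF z A SI]) (simp_all add: real zS)
    finally show ?thesis using glue[OF A] by (simp add: real zS)
  qed (use z A in \<open>auto simp: ext_submodular_def\<close>)
  ultimately show ?thesis using x by (simp add: gp_poly_def)
qed

lemma max_face_glue:
  assumes z: "ext_submodular I z" and fI: "finite I" and SI: "S \<subseteq> I"
    and y: "y \<in> max_face S (gp_poly I z)" and y': "y' \<in> max_face S (gp_poly I z)"
    and x: "x \<in> vecs I" and xy: "\<forall>k\<in>S. x k = y k" and xy': "\<forall>k\<in>I - S. x k = y' k"
  shows "x \<in> max_face S (gp_poly I z)"
proof (cases "S = {}")
  case True
  have "x k = y' k" for k
    using x xy' y' True by (cases "k \<in> I") (auto simp: max_face_def gp_poly_def vecs_def)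
  then have "x = y'" by (rule ext)
  then show ?thesis using y' by simp
next
  case False
  have "tight I z y S" "tight I z y' S" using max_face_tight[OF z fI _ SI False] y y' by auto
  then have "x \<in> gp_poly I z"
    using gp_poly_glue[OF z fI SI _ _ _ _ x xy xy'] y y' by (auto simp: max_face_def)
  moreover have "(\<Sum>k\<in>S. x k) = (\<Sum>k\<in>S. y k)" using xy by simp
  ultimately show ?thesis using y by (simp add: max_face_def)
qed

text \<open>In the notation of the coproduct: the face is the product of P|_S and P/_S.\<close>
lemma max_face_eq_prod_poly:
  assumes z: "ext_submodular I z" and fI: "finite I" and SI: "S \<subseteq> I"
  defines "F \<equiv> max_face S (gp_poly I z)"
  shows "F = prod_poly S (I - S) (restr S ` F) (restr (I - S) ` F)"
proof
  have "F \<subseteq> vecs I" by (auto simp: F_def max_face_def gp_poly_def)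
  then show "F \<subseteq> prod_poly S (I - S) (restr S ` F) (restr (I - S) ` F)"
    using SI by (auto simp: prod_poly_def Un_absorb1)
next
  show "prod_poly S (I - S) (restr S ` F) (restr (I - S) ` F) \<subseteq> F"
  proof
    fix x assume "x \<in> prod_poly S (I - S) (restr S ` F) (restr (I - S) ` F)"
    then obtain y y' where x: "x \<in> vecs I" and y: "y \<in> F" "y' \<in> F"
      and ry: "restr S x = restr S y" and ry': "restr (I - S) x = restr (I - S) y'"
      using SI by (auto simp: prod_poly_def Un_absorb1)
    have "\<forall>k\<in>S. x k = y k" using fun_cong[OF ry] unfolding restr_def by (metis (full_types))
    moreover have "\<forall>k\<in>I - S. x k = y' k" using fun_cong[OF ry'] unfolding restr_def by (metis (full_types))
    ultimately show "x \<in> F" using max_face_glue[OF z fI SI] x y unfolding F_def by blast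
  qed
qed

section \<open>Relations among indicator functions pass to maximal faces\<close>

definition coord_box :: "'e set \<Rightarrow> real \<Rightarrow> ('e \<Rightarrow> real) set" where
  "coord_box I R = PiE UNIV (\<lambda>i. if i \<in> I then {-R..R} else {0})"

lemma mem_coord_box: "v \<in> coord_box I R \<longleftrightarrow> (\<forall>i\<in>I. \<bar>v i\<bar> \<le> R) \<and> v \<in> vecs I"
  unfolding coord_box_def PiE_def Pi_def vecs_def by (auto simp: abs_le_iff)

lemma compact_coord_box: "compact (coord_box I R)"
proof -
  have "compactin (product_topology (\<lambda>i. euclidean) UNIV) (coord_box I R)"
    unfolding coord_box_def compactin_PiE by (auto simp: compactin_euclidean_iff)
  then show ?thesis by (simp add: euclidean_product_topology compactin_euclidean_iff)
qed

lemma fconvex_coord_box: "fconvex (coord_box I R)"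
proof -
  have "\<bar>(1 - u) * a + u * b\<bar> \<le> R" if "\<bar>a\<bar> \<le> R" "\<bar>b\<bar> \<le> R" "0 \<le> u" "u \<le> 1" for a b u :: real
  proof -
    have "\<bar>(1 - u) * a + u * b\<bar> \<le> (1 - u) * \<bar>a\<bar> + u * \<bar>b\<bar>"
      using that abs_triangle_ineq[of "(1 - u) * a" "u * b"] by (simp add: abs_mult)
    also have "\<dots> \<le> (1 - u) * R + u * R" using that by (intro add_mono mult_left_mono) auto
    finally show ?thesis by (simp add: algebra_simps)
  qed
  then show ?thesis by (auto simp: fconvex_def mem_coord_box vecs_def)
qed

lemma fconvex_sum_ge: "fconvex {v. a \<le> (\<Sum>i\<in>S. v i)}"
proof (unfold fconvex_def, intro ballI allI impI)
  fix x y and u :: real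
  assume "x \<in> {v. a \<le> (\<Sum>i\<in>S. v i)}" "y \<in> {v. a \<le> (\<Sum>i\<in>S. v i)}" "0 \<le> u \<and> u \<le> 1"
  then have "(1 - u) * a + u * a \<le> (1 - u) * (\<Sum>i\<in>S. x i) + u * (\<Sum>i\<in>S. y i)"
    by (intro add_mono mult_left_mono) auto
  then show "(\<lambda>i. (1 - u) * x i + u * y i) \<in> {v. a \<le> (\<Sum>i\<in>S. v i)}"
    unfolding mem_Collect_eq sum_convex_comb by (simp add: algebra_simps)
qed

lemma obtain_coord_box_meeting:
  assumes "finite M" "finite I" "\<And>m. m \<in> M \<Longrightarrow> W m \<subseteq> vecs I"
  obtains R where "\<And>m. m \<in> M \<Longrightarrow> W m \<noteq> {} \<Longrightarrow> W m \<inter> coord_box I R \<noteq> {}"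
proof
  define w where "w m = (SOME v. v \<in> W m)" for m
  define R where "R = (\<Sum>m\<in>M. \<Sum>i\<in>I. \<bar>w m i\<bar>)"
  fix m assume m: "m \<in> M" and "W m \<noteq> {}"
  then have w: "w m \<in> W m" unfolding w_def by (simp add: some_in_eq)
  have "\<bar>w m i\<bar> \<le> R" if "i \<in> I" for i
  proof -
    have "\<bar>w m i\<bar> \<le> (\<Sum>i\<in>I. \<bar>w m i\<bar>)" using that assms(2) by (intro member_le_sum) auto
    also have "\<dots> \<le> R" unfolding R_def using m assms(1) by (intro member_le_sum sum_nonneg) auto
    finally show ?thesis .
  qed
  then have "w m \<in> coord_box I R" using w assms(3)[OF m] by (auto simp: mem_coord_box)
  then show "W m \<inter> coord_box I R \<noteq> {}" using w by blast
qed

lemma feasible_cone_empty: "ext_gp I P \<Longrightarrow> x \<notin> P \<Longrightarrow> feasible_cone P x = {}"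
  by (auto simp: ext_gp_iff feasible_cone_gp_poly)

lemma sum_indicator_feasible_cones:
  fixes c :: "('e \<Rightarrow> real) set \<Rightarrow> 'k::comm_ring_1"
  assumes fM: "finite M" and P: "\<And>P. P \<in> M \<Longrightarrow> ext_gp I P"
    and rel: "\<And>y. (\<Sum>P\<in>M. c P * indicator P y) = 0"
  shows "(\<Sum>P\<in>M. c P * indicator (feasible_cone P x) v) = 0"
proof -
  have "\<forall>\<^sub>F e in at_right 0. \<forall>P\<in>M. ((\<lambda>i. x i + e * v i) \<in> P \<longleftrightarrow> v \<in> feasible_cone P x)"
    using fM P by (intro eventually_ball_finite ballI eventually_mem_iff_feasible_cone) auto
  then obtain e where e: "\<forall>P\<in>M. ((\<lambda>i. x i + e * v i) \<in> P \<longleftrightarrow> v \<in> feasible_cone P x)"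
    using eventually_happens'[OF trivial_limit_at_right_real] by blast
  have "(\<Sum>P\<in>M. c P * indicator (feasible_cone P x) v) = (\<Sum>P\<in>M. c P * indicator P (\<lambda>i. x i + e * v i))"
    using e by (intro sum.cong) (auto simp: indicator_def)
  then show ?thesis using rel by simp
qed

text \<open>Slicing the feasible cones by the half-space where the objective is at least 1 and by a
  large box produces compact convex sets whose indicators still cancel, so the Euler
  characteristic counts them with total weight zero.\<close>
lemma sum_weights_nonempty_cone_slices:
  fixes c :: "('e \<Rightarrow> real) set \<Rightarrow> 'k::comm_ring_1" and x :: "'e \<Rightarrow> real" and S :: "'e set" and R :: real
  assumes fM: "finite M" and fI: "finite I" and P: "\<And>P. P \<in> M \<Longrightarrow> ext_gp I P"
    and rel: "\<And>y. (\<Sum>P\<in>M. c P * indicator P y) = 0"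
  defines "K \<equiv> \<lambda>P. feasible_cone P x \<inter> {v. 1 \<le> (\<Sum>i\<in>S. v i)} \<inter> coord_box I R"
  shows "(\<Sum>P\<in>{P\<in>M. K P \<noteq> {}}. c P) = 0"
proof (rule sum_weights_zero_if_indicators_cancel[OF fI])
  show "finite {P\<in>M. K P \<noteq> {}}" using fM by simp
  fix P assume "P \<in> {P\<in>M. K P \<noteq> {}}"
  then have "K P \<noteq> {}" "ext_gp I P" using P by auto
  have H: "closed {v::'e \<Rightarrow> real. 1 \<le> (\<Sum>i\<in>S. v i)}"
    by (intro closed_Collect_le continuous_on_sum continuous_on_const continuous_on_product_coordinates)
  have "compact (coord_box I R \<inter> (feasible_cone P x \<inter> {v. 1 \<le> (\<Sum>i\<in>S. v i)}))"
    using \<open>ext_gp I P\<close> H by (intro compact_Int_closed compact_coord_box closed_Int closed_feasible_cone)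
  then have "compact (K P)" by (simp add: K_def Int_ac)
  moreover have "fconvex (K P)" unfolding K_def using \<open>ext_gp I P\<close>
    by (intro fconvex_Int fconvex_feasible_cone fconvex_sum_ge fconvex_coord_box)
  moreover have "agrees_off I (\<lambda>_. 0) (K P)" by (auto simp: K_def agrees_off_def mem_coord_box vecs_def)
  ultimately show "K P \<noteq> {} \<and> compact (K P) \<and> fconvex (K P) \<and> agrees_off I (\<lambda>_. 0) (K P)"
    using \<open>K P \<noteq> {}\<close> by blast
next
  fix v
  have "(\<Sum>P\<in>{P\<in>M. K P \<noteq> {}}. c P * indicator (K P) v) = (\<Sum>P\<in>M. c P * indicator (K P) v)"
    using fM by (intro sum.mono_neutral_left) auto
  also have "\<dots> = 0"
  proof (cases "1 \<le> (\<Sum>i\<in>S. v i) \<and> v \<in> coord_box I R")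
    case True
    then have "(\<Sum>P\<in>M. c P * indicator (K P) v) = (\<Sum>P\<in>M. c P * indicator (feasible_cone P x) v)"
      by (intro sum.cong) (auto simp: K_def indicator_def)
    then show ?thesis using sum_indicator_feasible_cones[OF fM P rel] by simp
  qed (auto simp: K_def indicator_def)
  finally show "(\<Sum>P\<in>{P\<in>M. K P \<noteq> {}}. c P * indicator (K P) v) = 0" .
qed

text \<open>A point x of P lies on the face iff no feasible direction at x raises the objective to 1;
  away from P both sides vanish. Hence the indicator of the face is that of P minus the
  Euler characteristic of a sliced feasible cone.\<close>
lemma sum_indicator_max_faces:
  fixes c :: "('e \<Rightarrow> real) set \<Rightarrow> 'k::comm_ring_1"
  assumes fM: "finite M" and fI: "finite I" and P: "\<And>P. P \<in> M \<Longrightarrow> ext_gp I P"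
    and rel: "\<And>y. (\<Sum>P\<in>M. c P * indicator P y) = 0"
  shows "(\<Sum>P\<in>M. c P * indicator (max_face S P) x) = 0"
proof -
  define W where "W P = feasible_cone P x \<inter> {v. 1 \<le> (\<Sum>i\<in>S. v i)}" for P
  obtain R where R: "\<And>P. P \<in> M \<Longrightarrow> W P \<noteq> {} \<Longrightarrow> W P \<inter> coord_box I R \<noteq> {}"
    using obtain_coord_box_meeting[OF fM fI, of W] feasible_cone_subset_vecs[OF P]
    unfolding W_def by blast
  define K where "K P = feasible_cone P x \<inter> {v. 1 \<le> (\<Sum>i\<in>S. v i)} \<inter> coord_box I R" for P
  have face: "indicator (max_face S P) x = indicator P x - (if K P \<noteq> {} then 1 else (0::'k))"
    if PM: "P \<in> M" for P
  proof (cases "x \<in> P")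
    case True
    then have "x \<in> max_face S P \<longleftrightarrow> K P = {}"
      using max_face_iff_feasible_cone[OF P[OF PM] True, of S] R[OF PM]
      unfolding W_def K_def by blast
    then show ?thesis using True by (simp add: indicator_def)
  next
    case False
    then show ?thesis using feasible_cone_empty[OF P[OF PM] False]
      by (simp add: indicator_def K_def max_face_def)
  qed
  have "(\<Sum>P\<in>M. c P * indicator (max_face S P) x)
      = (\<Sum>P\<in>M. c P * indicator P x) - (\<Sum>P\<in>M. c P * (if K P \<noteq> {} then 1 else 0))"
    by (simp add: face right_diff_distrib sum_subtractf)
  also have "(\<Sum>P\<in>M. c P * (if K P \<noteq> {} then 1 else 0)) = (\<Sum>P\<in>{P\<in>M. K P \<noteq> {}}. c P)"
    using fM by (simp add: sum.inter_filter if_distrib[of "\<lambda>t. c _ * t"] cong: if_cong)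
  also have "\<dots> = 0" unfolding K_def using sum_weights_nonempty_cone_slices[OF fM fI P rel] by blast
  finally show ?thesis using rel by simp
qed

section \<open>Strong valuations and the coproduct\<close>

lemma max_face_empty_if_unbounded:
  "\<not> bdd_above ((\<lambda>x. \<Sum>i\<in>S. x i) ` P) \<Longrightarrow> max_face S P = {}"
  by (auto simp: max_face_def bdd_above_def)

lemma cop_max_face: "cop I S P = (if bdd_above ((\<lambda>x. \<Sum>i\<in>S. x i) ` P)
   then Some (restr S ` max_face S P, restr (I - S) ` max_face S P) else None)"
  by (simp add: cop_def max_face_def Let_def)

lemma sum_indicator_coproduct_factors:
  fixes e :: "('e \<Rightarrow> real) set \<Rightarrow> 'k::comm_ring_1"
  assumes fM: "finite M" and fI: "finite I" and SI: "S \<subseteq> I" and P: "\<And>P. P \<in> M \<Longrightarrow> ext_gp I P"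
    and rel: "\<And>y. (\<Sum>P\<in>M. e P * indicator P y) = 0"
  shows "(\<Sum>P\<in>M. e P * indicator (restr S ` max_face S P) y1
                    * indicator (restr (I - S) ` max_face S P) y2) = 0"
proof (cases "y1 \<in> vecs S \<and> y2 \<in> vecs (I - S)")
  case True
  have "indicator (restr S ` max_face S P) y1 * indicator (restr (I - S) ` max_face S P) y2
      = (indicator (max_face S P) (\<lambda>i. y1 i + y2 i) :: 'k)" if PM: "P \<in> M" for P
  proof -
    obtain z where z: "ext_submodular I z" "P = gp_poly I z" using P[OF PM] by (auto simp: ext_gp_iff)
    have "restr S (\<lambda>i. y1 i + y2 i) = y1" "restr (I - S) (\<lambda>i. y1 i + y2 i) = y2"
      "(\<lambda>i. y1 i + y2 i) \<in> vecs (S \<union> (I - S))"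
      using True by (auto simp: restr_def vecs_def)
    moreover have "(\<lambda>i. y1 i + y2 i) \<in> max_face S P \<longleftrightarrow>
        (\<lambda>i. y1 i + y2 i) \<in> prod_poly S (I - S) (restr S ` max_face S P) (restr (I - S) ` max_face S P)"
      unfolding z(2) by (subst max_face_eq_prod_poly[OF z(1) fI SI]) (rule refl)
    ultimately show ?thesis by (simp add: prod_poly_def indicator_def)
  qed
  then show ?thesis using sum_indicator_max_faces[OF fM fI P rel, of S "\<lambda>i. y1 i + y2 i"]
    by (simp add: mult.assoc)
next
  case False
  have rv: "restr A x \<in> vecs A" for A x by (simp add: restr_def vecs_def)
  show ?thesis using False by (auto simp: indicator_def rv intro!: sum.neutral)
qed

lemma sum_group_by_pairs:
  assumes "finite M" and "\<And>a b. additive (h a b)"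
  shows "(\<Sum>a\<in>A ` M. \<Sum>b\<in>B ` M. h a b (\<Sum>P\<in>{P\<in>M. A P = a \<and> B P = b}. e P))
    = (\<Sum>P\<in>M. h (A P) (B P) (e P))"
proof -
  have "(\<Sum>a\<in>A ` M. \<Sum>b\<in>B ` M. h a b (\<Sum>P\<in>{P\<in>M. A P = a \<and> B P = b}. e P))
      = (\<Sum>a\<in>A ` M. \<Sum>b\<in>B ` M. \<Sum>P\<in>{P\<in>M. A P = a \<and> B P = b}. h (A P) (B P) (e P))"
    by (intro sum.cong refl) (simp add: additive.sum[OF assms(2)])
  also have "\<dots> = (\<Sum>p\<in>A ` M \<times> B ` M. \<Sum>P\<in>{P\<in>M. (A P, B P) = p}. h (A P) (B P) (e P))"
    by (simp add: sum.cartesian_product split_def prod_eq_iff)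
  also have "\<dots> = (\<Sum>P\<in>M. h (A P) (B P) (e P))" by (rule sum.group) (use assms(1) in auto)
  finally show ?thesis .
qed

lemma comp_map_singleton: "comp_map I [S] [f] = f"
  by (simp add: comp_map_def fun_eq_iff)

lemma comp_map_Cons: "comp_map I (S1 # S2 # Ss) (f # fs) =
   (\<lambda>P. case cop I S1 P of None \<Rightarrow> 0 | Some (A, B) \<Rightarrow> f A * comp_map (I - S1) (S2 # Ss) fs B)"
  by (auto simp: comp_map_def fun_eq_iff split: option.split)

lemma set_decomp_Cons:
  assumes "set_decomp I (S1 # Ss)"
  shows "S1 \<subseteq> I" "set_decomp (I - S1) Ss"
proof -
  have disj: "(S1 # Ss) ! i \<inter> (S1 # Ss) ! j = {}" if "i < Suc (length Ss)" "j < Suc (length Ss)" "i \<noteq> j" for i j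
    using assms that by (simp add: set_decomp_def)
  have "S1 \<inter> T = {}" if T: "T \<in> set Ss" for T
  proof -
    obtain j where "j < length Ss" "Ss ! j = T" using T by (auto simp: in_set_conv_nth)
    then show ?thesis using disj[of 0 "Suc j"] by simp
  qed
  moreover have "\<Union> (set (S1 # Ss)) = I" using assms by (simp add: set_decomp_def)
  ultimately show "S1 \<subseteq> I" "set_decomp (I - S1) Ss"
    using disj[of "Suc i" "Suc j" for i j] by (auto simp: set_decomp_def)
qed

lemma k_algebra_module: "k_algebra sc \<Longrightarrow> module sc"
  by unfold_locales (simp_all add: k_algebra_def)

lemma module_mult: "module (times :: 'k::comm_ring_1 \<Rightarrow> 'k \<Rightarrow> 'k)"
  by unfold_locales (simp_all add: algebra_simps)

text \<open>One step of Gaussian elimination.\<close>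
lemma module_sum_eliminate:
  fixes s :: "'k::field \<Rightarrow> 'b::ab_group_add \<Rightarrow> 'b"
  assumes "module s" and fA: "finite A" and a0: "a0 \<in> A" "lam a0 \<noteq> 0"
    and rel: "(\<Sum>a\<in>A. s (lam a) (h a)) = 0"
  shows "(\<Sum>a\<in>A - {a0}. s (C a - lam a / lam a0 * C a0) (h a)) = (\<Sum>a\<in>A. s (C a) (h a))"
proof -
  interpret module s by fact
  have split: "(\<Sum>a\<in>A. k a) = k a0 + (\<Sum>a\<in>A - {a0}. k a)" for k :: "_ \<Rightarrow> 'b"
    using fA a0(1) by (simp add: sum.remove)
  have rest: "(\<Sum>a\<in>A - {a0}. s (lam a) (h a)) = - s (lam a0) (h a0)"
    using rel split[of "\<lambda>a. s (lam a) (h a)"] by (simp add: eq_neg_iff_add_eq_0 add.commute)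
  have "(\<Sum>a\<in>A - {a0}. s (C a - lam a / lam a0 * C a0) (h a))
      = (\<Sum>a\<in>A - {a0}. s (C a) (h a)) - s (C a0 / lam a0) (\<Sum>a\<in>A - {a0}. s (lam a) (h a))"
    by (simp add: scale_left_diff_distrib scale_sum_right sum_subtractf ac_simps)
  also have "\<dots> = (\<Sum>a\<in>A - {a0}. s (C a) (h a)) + s (C a0) (h a0)"
    using a0(2) by (simp add: rest)
  finally show ?thesis using split[of "\<lambda>a. s (C a) (h a)"] by (simp add: add.commute)
qed

lemma indicator_relation_eliminate:
  fixes lam :: "'a set \<Rightarrow> 'k::field" and C :: "'a set \<Rightarrow> 'b set \<Rightarrow> 'k"
  assumes "finite AA" "\<alpha>0 \<in> AA" "lam \<alpha>0 \<noteq> 0" and lrel: "\<And>y. (\<Sum>\<alpha>\<in>AA. lam \<alpha> * indicator \<alpha> y) = 0"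
  shows "(\<Sum>\<alpha>\<in>AA - {\<alpha>0}. \<Sum>\<beta>\<in>BB. (C \<alpha> \<beta> - lam \<alpha> / lam \<alpha>0 * C \<alpha>0 \<beta>) * indicator \<alpha> y1 * indicator \<beta> y2)
    = (\<Sum>\<alpha>\<in>AA. \<Sum>\<beta>\<in>BB. C \<alpha> \<beta> * indicator \<alpha> y1 * indicator \<beta> y2)"
proof -
  have "(\<Sum>\<alpha>\<in>AA - {\<alpha>0}. (C \<alpha> \<beta> - lam \<alpha> / lam \<alpha>0 * C \<alpha>0 \<beta>) * indicator \<alpha> y1)
      = (\<Sum>\<alpha>\<in>AA. C \<alpha> \<beta> * indicator \<alpha> y1)" for \<beta>
    using module_sum_eliminate[OF module_mult assms(1-3) lrel] .
  moreover have "(\<Sum>\<alpha>\<in>A. \<Sum>\<beta>\<in>BB. D \<alpha> \<beta> * indicator \<alpha> y1 * indicator \<beta> y2)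
      = (\<Sum>\<beta>\<in>BB. (\<Sum>\<alpha>\<in>A. D \<alpha> \<beta> * indicator \<alpha> y1) * indicator \<beta> y2)" for A and D :: "_ \<Rightarrow> _ \<Rightarrow> 'k"
    by (subst sum.swap) (simp add: sum_distrib_right)
  ultimately show ?thesis by simp
qed

lemma strong_valI:
  fixes sc :: "'k::field \<Rightarrow> 'r::ring_1 \<Rightarrow> 'r"
  assumes "\<And>D e. finite D \<Longrightarrow> D \<subseteq> basis F I \<Longrightarrow> (\<And>x. (\<Sum>P\<in>D. e P * indicator P x) = 0) \<Longrightarrow>
    (\<Sum>P\<in>D. sc (e P) (f P)) = 0"
  shows "strong_val sc F I f"
proof (unfold strong_val_def, intro allI impI)
  fix c :: "_ \<Rightarrow> 'k"
  assume "finite {P. c P \<noteq> 0}" "{P. c P \<noteq> 0} \<subseteq> basis F I"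
    and "\<forall>x. (\<Sum>P | c P \<noteq> 0. c P * (if x \<in> P then 1 else 0)) = 0"
  moreover have "(\<Sum>P | c P \<noteq> 0. c P * indicator P x) = (\<Sum>P | c P \<noteq> 0. c P * (if x \<in> P then 1 else 0))"
    for x by (simp add: indicator_def of_bool_def)
  ultimately show "(\<Sum>P | c P \<noteq> 0. sc (c P) (f P)) = 0" using assms[of "{P. c P \<noteq> 0}" c] by simp
qed

context
  fixes sc :: "'k::field \<Rightarrow> 'r::ring_1 \<Rightarrow> 'r"
  assumes alg: "k_algebra sc"
begin

interpretation module sc by (rule k_algebra_module[OF alg])

lemma scale_mult_left: "sc a (x * y) = sc a x * y"
  using alg unfolding k_algebra_def by blast

lemma scale_mult_right: "sc a (x * y) = x * sc a y"
  using alg unfolding k_algebra_def by blast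

lemma strong_valD:
  assumes sv: "strong_val sc F I f" and fD: "finite D" and DB: "D \<subseteq> basis F I"
    and rel: "\<And>x. (\<Sum>P\<in>D. e P * indicator P x) = 0"
  shows "(\<Sum>P\<in>D. sc (e P) (f P)) = 0"
proof -
  define c where "c P = (if P \<in> D then e P else 0)" for P
  have sub: "{P. c P \<noteq> 0} \<subseteq> D" by (auto simp: c_def)
  have sums: "(\<Sum>P | c P \<noteq> 0. h P) = (\<Sum>P\<in>D. h P)" if "\<And>P. c P = 0 \<Longrightarrow> h P = 0" for h :: "_ \<Rightarrow> 'b::comm_monoid_add"
    using that by (intro sum.mono_neutral_left[OF fD sub]) auto
  have "(\<Sum>P | c P \<noteq> 0. sc (c P) (f P)) = 0"
    using sv sub finite_subset[OF sub fD] DB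
  proof (unfold strong_val_def, elim allE impE)
    show "\<forall>x. (\<Sum>P | c P \<noteq> 0. c P * (if x \<in> P then 1 else 0)) = 0"
    proof
      fix x
      have "(\<Sum>P | c P \<noteq> 0. c P * (if x \<in> P then 1 else 0)) = (\<Sum>P\<in>D. c P * indicator P x)"
        by (subst sums) (simp_all add: indicator_def of_bool_def)
      also have "\<dots> = 0" using rel by (simp add: c_def cong: sum.cong)
      finally show "(\<Sum>P | c P \<noteq> 0. c P * (if x \<in> P then 1 else 0)) = 0" .
    qed
  qed auto
  moreover have "(\<Sum>P | c P \<noteq> 0. sc (c P) (f P)) = (\<Sum>P\<in>D. sc (c P) (f P))" by (rule sums) simp
  ultimately show ?thesis by (simp add: c_def cong: sum.cong)
qed

lemma sum_scale_factor_right: "(\<Sum>a\<in>A. sc (lam a) (h a * y)) = (\<Sum>a\<in>A. sc (lam a) (h a)) * y"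
  by (simp add: scale_mult_left sum_distrib_right)

lemma strong_val_tensor_independent:
  assumes g: "strong_val sc F S2 g" and fB: "finite BB" "BB \<subseteq> basis F S2"
    and indep: "\<And>lam :: _ \<Rightarrow> 'k. (\<And>y. (\<Sum>\<alpha>\<in>AA. lam \<alpha> * indicator \<alpha> y) = 0) \<Longrightarrow> \<forall>\<alpha>\<in>AA. lam \<alpha> = 0"
    and rel: "\<And>y1 y2. (\<Sum>\<alpha>\<in>AA. \<Sum>\<beta>\<in>BB. C \<alpha> \<beta> * indicator \<alpha> y1 * indicator \<beta> y2) = 0"
  shows "(\<Sum>\<alpha>\<in>AA. \<Sum>\<beta>\<in>BB. sc (C \<alpha> \<beta>) (f \<alpha> * g \<beta>)) = 0"
proof -
  have "(\<Sum>\<beta>\<in>BB. C \<alpha> \<beta> * indicator \<beta> y2) = 0" if "\<alpha> \<in> AA" for \<alpha> y2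
  proof -
    have "(\<Sum>\<alpha>\<in>AA. (\<Sum>\<beta>\<in>BB. C \<alpha> \<beta> * indicator \<beta> y2) * indicator \<alpha> y1) = 0" for y1
      using rel[of y1 y2] by (simp add: sum_distrib_left sum_distrib_right ac_simps)
    then show ?thesis using indep[of "\<lambda>\<alpha>. \<Sum>\<beta>\<in>BB. C \<alpha> \<beta> * indicator \<beta> y2"] that by blast
  qed
  then have "(\<Sum>\<beta>\<in>BB. sc (C \<alpha> \<beta>) (g \<beta>)) = 0" if "\<alpha> \<in> AA" for \<alpha>
    using strong_valD[OF g fB] that by blast
  then show ?thesis by (simp add: scale_mult_right sum_distrib_left[symmetric])
qed

text \<open>Induction on the number of left factors: a linear relation among their indicator
  functions lets us eliminate one of them.\<close>
lemma strong_val_tensor: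
  assumes f: "strong_val sc F S1 f" and g: "strong_val sc F S2 g"
  shows "finite AA \<Longrightarrow> finite BB \<Longrightarrow> AA \<subseteq> basis F S1 \<Longrightarrow> BB \<subseteq> basis F S2 \<Longrightarrow>
    (\<And>y1 y2. (\<Sum>\<alpha>\<in>AA. \<Sum>\<beta>\<in>BB. C \<alpha> \<beta> * indicator \<alpha> y1 * indicator \<beta> y2) = 0) \<Longrightarrow>
    (\<Sum>\<alpha>\<in>AA. \<Sum>\<beta>\<in>BB. sc (C \<alpha> \<beta>) (f \<alpha> * g \<beta>)) = 0"
proof (induction "card AA" arbitrary: AA C rule: less_induct)
  case less
  show ?case
  proof (cases "\<exists>lam :: _ \<Rightarrow> 'k. (\<forall>y. (\<Sum>\<alpha>\<in>AA. lam \<alpha> * indicator \<alpha> y) = 0) \<and> (\<exists>\<alpha>0\<in>AA. lam \<alpha>0 \<noteq> 0)")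
    case True
    then obtain lam :: "_ \<Rightarrow> 'k" and \<alpha>0 where lrel: "\<And>y. (\<Sum>\<alpha>\<in>AA. lam \<alpha> * indicator \<alpha> y) = 0"
      and \<alpha>0: "\<alpha>0 \<in> AA" "lam \<alpha>0 \<noteq> 0" by blast
    define C' where "C' \<alpha> \<beta> = C \<alpha> \<beta> - lam \<alpha> / lam \<alpha>0 * C \<alpha>0 \<beta>" for \<alpha> \<beta>
    have "(\<Sum>\<alpha>\<in>AA - {\<alpha>0}. \<Sum>\<beta>\<in>BB. C' \<alpha> \<beta> * indicator \<alpha> y1 * indicator \<beta> y2) = 0" for y1 y2
      using indicator_relation_eliminate[OF less.prems(1) \<alpha>0 lrel, where BB = BB and C = C] less.prems(5)
      unfolding C'_def by simp
    then have IH: "(\<Sum>\<alpha>\<in>AA - {\<alpha>0}. \<Sum>\<beta>\<in>BB. sc (C' \<alpha> \<beta>) (f \<alpha> * g \<beta>)) = 0"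
      using less.prems card_Diff1_less[OF less.prems(1) \<alpha>0(1)] by (intro less.hyps) auto
    have elim: "(\<Sum>\<alpha>\<in>AA - {\<alpha>0}. sc (C' \<alpha> \<beta>) (f \<alpha> * g \<beta>)) = (\<Sum>\<alpha>\<in>AA. sc (C \<alpha> \<beta>) (f \<alpha> * g \<beta>))"
      for \<beta>
    proof -
      have "(\<Sum>\<alpha>\<in>AA. sc (lam \<alpha>) (f \<alpha> * g \<beta>)) = 0"
        using strong_valD[OF f less.prems(1,3) lrel] by (simp add: sum_scale_factor_right)
      then show ?thesis unfolding C'_def
        by (rule module_sum_eliminate[where lam = lam, OF k_algebra_module[OF alg] less.prems(1) \<alpha>0])
    qed
    have "(\<Sum>\<alpha>\<in>AA. \<Sum>\<beta>\<in>BB. sc (C \<alpha> \<beta>) (f \<alpha> * g \<beta>)) = (\<Sum>\<beta>\<in>BB. \<Sum>\<alpha>\<in>AA. sc (C \<alpha> \<beta>) (f \<alpha> * g \<beta>))"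
      by (rule sum.swap)
    also have "\<dots> = (\<Sum>\<beta>\<in>BB. \<Sum>\<alpha>\<in>AA - {\<alpha>0}. sc (C' \<alpha> \<beta>) (f \<alpha> * g \<beta>))" by (simp add: elim)
    also have "\<dots> = (\<Sum>\<alpha>\<in>AA - {\<alpha>0}. \<Sum>\<beta>\<in>BB. sc (C' \<alpha> \<beta>) (f \<alpha> * g \<beta>))"
      by (rule sum.swap[symmetric])
    also have "\<dots> = 0" by (rule IH)
    finally show ?thesis .
  next
    case False
    then show ?thesis using strong_val_tensor_independent[OF g less.prems(2,4) _ less.prems(5)] by blast
  qed
qed

lemma strong_val_coproduct:
  assumes hopf: "hopf_sub F" and fI: "finite I" and SI: "S \<subseteq> I"
    and f: "strong_val sc F S f" and g: "strong_val sc F (I - S) g"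
  shows "strong_val sc F I (\<lambda>P. case cop I S P of None \<Rightarrow> 0 | Some (A, B) \<Rightarrow> f A * g B)"
proof (rule strong_valI)
  fix D and e :: "_ \<Rightarrow> 'k"
  assume fD: "finite D" and DB: "D \<subseteq> basis F I" and rel: "\<And>x. (\<Sum>P\<in>D. e P * indicator P x) = 0"
  define bdd where "bdd P \<longleftrightarrow> bdd_above ((\<lambda>x. \<Sum>i\<in>S. x i) ` P)" for P :: "(_ \<Rightarrow> real) set"
  define A where "A P = restr S ` max_face S P" for P
  define B where "B P = restr (I - S) ` max_face S P" for P
  define D' where "D' = {P\<in>D. bdd P}"
  define C where "C a b = (\<Sum>P\<in>{P\<in>D'. A P = a \<and> B P = b}. e P)" for a b
  have fD': "finite D'" using fD by (simp add: D'_def)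
  have gp: "\<And>P. P \<in> D \<Longrightarrow> ext_gp I P" using hopf DB by (auto simp: hopf_sub_def basis_def)
  have cop: "cop I S P = (if bdd P then Some (A P, B P) else None)" for P
    by (simp add: cop_max_face bdd_def A_def B_def)
  have "A ` D' \<subseteq> basis F S" "B ` D' \<subseteq> basis F (I - S)"
    using hopf DB SI cop by (auto simp: hopf_sub_def basis_def D'_def)
  moreover have "(\<Sum>a\<in>A ` D'. \<Sum>b\<in>B ` D'. C a b * indicator a y1 * indicator b y2) = 0" for y1 y2
  proof -
    have "(\<Sum>a\<in>A ` D'. \<Sum>b\<in>B ` D'. C a b * indicator a y1 * indicator b y2)
        = (\<Sum>P\<in>D'. e P * indicator (A P) y1 * indicator (B P) y2)"
      unfolding C_def by (rule sum_group_by_pairs[OF fD', where h = "\<lambda>a b c. c * indicator a y1 * indicator b y2"])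
        (intro additive.intro, simp add: distrib_right)
    also have "\<dots> = (\<Sum>P\<in>D. e P * indicator (A P) y1 * indicator (B P) y2)"
    proof (rule sum.mono_neutral_left[OF fD])
      show "\<forall>P\<in>D - D'. e P * indicator (A P) y1 * indicator (B P) y2 = 0"
        by (auto simp: D'_def bdd_def A_def max_face_empty_if_unbounded)
    qed (auto simp: D'_def)
    also have "\<dots> = 0"
      unfolding A_def B_def by (rule sum_indicator_coproduct_factors[OF fD fI SI gp rel])
    finally show ?thesis .
  qed
  ultimately have "(\<Sum>a\<in>A ` D'. \<Sum>b\<in>B ` D'. sc (C a b) (f a * g b)) = 0"
    using fD' by (intro strong_val_tensor[OF f g]) auto
  moreover have "(\<Sum>a\<in>A ` D'. \<Sum>b\<in>B ` D'. sc (C a b) (f a * g b)) = (\<Sum>P\<in>D'. sc (e P) (f (A P) * g (B P)))"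
    unfolding C_def by (rule sum_group_by_pairs[OF fD', where h = "\<lambda>a b c. sc c (f a * g b)"])
      (intro additive.intro scale_left_distrib)
  moreover have "(\<Sum>P\<in>D'. sc (e P) (f (A P) * g (B P)))
      = (\<Sum>P\<in>D. sc (e P) (case cop I S P of None \<Rightarrow> 0 | Some (A, B) \<Rightarrow> f A * g B))"
    using fD by (intro sum.mono_neutral_cong_left) (auto simp: D'_def cop)
  ultimately show "(\<Sum>P\<in>D. sc (e P) (case cop I S P of None \<Rightarrow> 0 | Some (A, B) \<Rightarrow> f A * g B)) = 0"
    by simp
qed

lemma strong_val_comp_map:
  assumes hopf: "hopf_sub F"
  shows "finite I \<Longrightarrow> set_decomp I S \<Longrightarrow> S \<noteq> [] \<Longrightarrow> length fs = length S \<Longrightarrow>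
    \<forall>i<length S. strong_val sc F (S ! i) (fs ! i) \<Longrightarrow> strong_val sc F I (comp_map I S fs)"
proof (induction S arbitrary: I fs)
  case (Cons S1 Ss)
  obtain f fs' where fs: "fs = f # fs'" using Cons.prems(4) by (cases fs) auto
  have f: "strong_val sc F S1 f" and fs': "\<forall>i<length Ss. strong_val sc F (Ss ! i) (fs' ! i)"
    using Cons.prems(4,5) unfolding fs by (simp_all add: All_less_Suc2)
  show ?case
  proof (cases "Ss = []")
    case True
    then have "S1 = I" "fs' = []" using Cons.prems(2,4) by (auto simp: set_decomp_def fs)
    then show ?thesis using f fs True by (simp add: comp_map_singleton)
  next
    case False
    then obtain S2 Ss' where Ss: "Ss = S2 # Ss'" by (meson neq_Nil_conv)
    have S1: "S1 \<subseteq> I" "set_decomp (I - S1) Ss" using set_decomp_Cons[OF Cons.prems(2)] by auto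
    then have "strong_val sc F (I - S1) (comp_map (I - S1) Ss fs')"
      using Cons.IH Cons.prems(1,4) False fs fs' by simp
    then show ?thesis
      using strong_val_coproduct[OF hopf Cons.prems(1) S1(1) f] by (simp add: fs Ss comp_map_Cons)
  qed
qed simp

lemma strong_val_sum:
  assumes "\<forall>j<n. strong_val sc F I (g j)"
  shows "strong_val sc F I (\<lambda>P. \<Sum>j<n. g j P)"
proof (rule strong_valI)
  fix D and e :: "_ \<Rightarrow> 'k"
  assume "finite D" "D \<subseteq> basis F I" "\<And>x. (\<Sum>P\<in>D. e P * indicator P x) = 0"
  then have "(\<Sum>P\<in>D. sc (e P) (g j P)) = 0" if "j < n" for j
    using strong_valD assms that by blast
  then show "(\<Sum>P\<in>D. sc (e P) (\<Sum>j<n. g j P)) = 0"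
    by (simp add: scale_sum_right sum.swap[where A = D])
qed

end

theorem theoremB:
  fixes sc :: "'k::field \<Rightarrow> 'r::ring_1 \<Rightarrow> 'r"
    and F :: "('e set \<times> 'e poly) set"
    and I :: "'e set"
    and S :: "'e set list"
    and fs :: "('e poly \<Rightarrow> 'r) list"
  assumes "k_algebra sc"
    and "hopf_sub F"
    and "finite I"
    and "set_decomp I S"
    and "S \<noteq> []"
    and "length fs = length S"
    and "\<forall>i < length S. strong_val sc F (S ! i) (fs ! i)"
  shows "strong_val sc F I (comp_map I S fs) \<and>
    (\<forall>(n::nat) (Ss :: nat \<Rightarrow> 'e set list) (fss :: nat \<Rightarrow> ('e poly \<Rightarrow> 'r) list).
        (\<forall>j < n. val_data sc F I (Ss j) (fss j)) \<longrightarrow>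
        strong_val sc F I (\<lambda>P. \<Sum>j < n. comp_map I (Ss j) (fss j) P))"
proof (intro conjI allI impI)
  show "strong_val sc F I (comp_map I S fs)"
    using strong_val_comp_map[OF assms(1,2)] assms(3-7) by blast
  fix n and Ss :: "nat \<Rightarrow> 'e set list" and fss :: "nat \<Rightarrow> ('e poly \<Rightarrow> 'r) list"
  assume "\<forall>j < n. val_data sc F I (Ss j) (fss j)"
  then have "\<forall>j < n. strong_val sc F I (comp_map I (Ss j) (fss j))"
    using strong_val_comp_map[OF assms(1,2)] assms(3) by (auto simp: val_data_def)
  then show "strong_val sc F I (\<lambda>P. \<Sum>j < n. comp_map I (Ss j) (fss j) P)"
    by (rule strong_val_sum[OF assms(1)])
qed

end
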